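(* No $\ge 2$-subdivision of $K_4$ is a restricted frame graph.
   Context: A $\ge 2$-subdivision of $K_4$ is a graph obtained from $K_4$ by replacing every edge by a path with at least $3$ edges. A frame is the boundary of an axis-parallel box $I\times J\subset\mathbb R^2$. A graph $G$ is a restricted frame graph if there is a family of frames $\{F_v : v\in V(G)\}$ with $uv\in E(G)$ iff $F_u\cap F_v\neq\emptyset$, satisfying: (1) corners of a frame do not coincide with any point of another frame; (2) the left side of any frame does not intersect any other frame; (3) if the right side of a frame intersects a second frame, this right side intersects both the top and the bottom side of the second frame; (4) if two frames have non-empty intersection, then no frame is entirely contained in the intersection of the two regions bounded by these two frames. *)

theory Defs
  imports Complex_Main
begin

definition inner :: "'a list \<Rightarrow> 'a list" where
  "inner p = butlast (tl p)"

text \<open>(V,E) is (isomorphic to) a graph obtained from K4 by replacing each of its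
six edges by a path with at least 3 edges: there are 4 distinct branch vertices
b 0,...,b 3 and for each pair i<j a path P i j from b i to b j with at least
3 edges (at least 4 vertices); interior vertices of different paths are disjoint
and avoid the branch vertices; V consists exactly of the vertices on these paths
and E consists exactly of the consecutive pairs on these paths.\<close>
definition ge2_subdivision_K4 :: "'a set \<Rightarrow> ('a \<Rightarrow> 'a \<Rightarrow> bool) \<Rightarrow> bool" where
  "ge2_subdivision_K4 V E \<longleftrightarrow>
    (\<exists>(b :: nat \<Rightarrow> 'a) (P :: nat \<Rightarrow> nat \<Rightarrow> 'a list).
       inj_on b {0..<4} \<and>
       (\<forall>i j. i < j \<and> j < 4 \<longrightarrow>
          distinct (P i j) \<and> length (P i j) \<ge> 4 \<and>
          hd (P i j) = b i \<and> last (P i j) = b j \<and>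
          set (inner (P i j)) \<inter> b ` {0..<4} = {}) \<and>
       (\<forall>i j k l. i < j \<and> j < 4 \<and> k < l \<and> l < 4 \<and> (i, j) \<noteq> (k, l) \<longrightarrow>
          set (inner (P i j)) \<inter> set (inner (P k l)) = {}) \<and>
       V = (\<Union>i\<in>{0..<4}. \<Union>j\<in>{i<..<4}. set (P i j)) \<and>
       (\<forall>u v. E u v \<longleftrightarrow>
          (\<exists>i j n. i < j \<and> j < 4 \<and> Suc n < length (P i j) \<and>
             ((u = P i j ! n \<and> v = P i j ! Suc n) \<or> (v = P i j ! n \<and> u = P i j ! Suc n)))))"

text \<open>A box is encoded as (x1, x2, y1, y2) meaning [x1,x2] \<times> [y1,y2] with x1 < x2
and y1 < y2; the frame is its boundary.\<close>
type_synonym box = "real \<times> real \<times> real \<times> real"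

definition valid_box :: "box \<Rightarrow> bool" where
  "valid_box B = (case B of (x1, x2, y1, y2) \<Rightarrow> x1 < x2 \<and> y1 < y2)"

definition region :: "box \<Rightarrow> (real \<times> real) set" where
  "region B = (case B of (x1, x2, y1, y2) \<Rightarrow> {x1..x2} \<times> {y1..y2})"

definition left_side :: "box \<Rightarrow> (real \<times> real) set" where
  "left_side B = (case B of (x1, x2, y1, y2) \<Rightarrow> {x1} \<times> {y1..y2})"

definition right_side :: "box \<Rightarrow> (real \<times> real) set" where
  "right_side B = (case B of (x1, x2, y1, y2) \<Rightarrow> {x2} \<times> {y1..y2})"

definition bottom_side :: "box \<Rightarrow> (real \<times> real) set" where
  "bottom_side B = (case B of (x1, x2, y1, y2) \<Rightarrow> {x1..x2} \<times> {y1})"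

definition top_side :: "box \<Rightarrow> (real \<times> real) set" where
  "top_side B = (case B of (x1, x2, y1, y2) \<Rightarrow> {x1..x2} \<times> {y2})"

definition frame :: "box \<Rightarrow> (real \<times> real) set" where
  "frame B = left_side B \<union> right_side B \<union> bottom_side B \<union> top_side B"

definition corners :: "box \<Rightarrow> (real \<times> real) set" where
  "corners B = (case B of (x1, x2, y1, y2) \<Rightarrow> {(x1, y1), (x1, y2), (x2, y1), (x2, y2)})"

definition restricted_frame_graph :: "'a set \<Rightarrow> ('a \<Rightarrow> 'a \<Rightarrow> bool) \<Rightarrow> bool" where
  "restricted_frame_graph V E \<longleftrightarrow>
    (\<exists>F :: 'a \<Rightarrow> box.
       (\<forall>v\<in>V. valid_box (F v)) \<and>
       (\<forall>u\<in>V. \<forall>v\<in>V. u \<noteq> v \<longrightarrow> (E u v \<longleftrightarrow> frame (F u) \<inter> frame (F v) \<noteq> {})) \<and>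
       \<comment> \<open>(1) corners of a frame avoid every other frame\<close>
       (\<forall>u\<in>V. \<forall>v\<in>V. u \<noteq> v \<longrightarrow> corners (F u) \<inter> frame (F v) = {}) \<and>
       \<comment> \<open>(2) left sides avoid every other frame\<close>
       (\<forall>u\<in>V. \<forall>v\<in>V. u \<noteq> v \<longrightarrow> left_side (F u) \<inter> frame (F v) = {}) \<and>
       \<comment> \<open>(3) a right side meeting another frame meets both its top and bottom side\<close>
       (\<forall>u\<in>V. \<forall>v\<in>V. u \<noteq> v \<longrightarrow> right_side (F u) \<inter> frame (F v) \<noteq> {} \<longrightarrow>
           right_side (F u) \<inter> top_side (F v) \<noteq> {} \<and>
           right_side (F u) \<inter> bottom_side (F v) \<noteq> {}) \<and>
       \<comment> \<open>(4) no frame inside the intersection of the regions of two intersecting frames\<close>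
       (\<forall>u\<in>V. \<forall>v\<in>V. u \<noteq> v \<longrightarrow> frame (F u) \<inter> frame (F v) \<noteq> {} \<longrightarrow>
           (\<forall>w\<in>V. \<not> frame (F w) \<subseteq> region (F u) \<inter> region (F v))))"

end

theory Submission
  imports Defs
begin

(* Conditions (1)-(3) force two touching frames into a crossing position: the right side of one
   frame cuts through the other, which is strictly lower.  In the subdivided triangle opposite a
   branch vertex (an induced cycle), the lowest frame is therefore pierced by both of its
   neighbours, and since these are non-adjacent their frames are nested: some vertex a outside
   N[w] has its frame inside that of w.  Deleting a closed neighbourhood N[w] leaves a subdivision
   of K4 connected, and nesting inside F w propagates along the edges of G - N[w], so every frame
   of G - N[w] lies inside F w.  As every closed neighbourhood misses one of the four subdivided
   triangles, we obtain w1, w2 outside each other's closed neighbourhoods with F w2 inside F w1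
   and F w1 inside F w2. *)

text \<open>The right side of \<open>A\<close> cuts through \<open>B\<close>: \<open>B\<close> starts inside \<open>A\<close>, ends to the right of it,
and lies vertically strictly within \<open>A\<close>.\<close>
definition pierces :: "box \<Rightarrow> box \<Rightarrow> bool" where
  "pierces A B \<longleftrightarrow> (case A of (a1, a2, a3, a4) \<Rightarrow> case B of (b1, b2, b3, b4) \<Rightarrow>
     a1 < b1 \<and> b1 < a2 \<and> a2 < b2 \<and> a3 < b3 \<and> b4 < a4)"

definition strictly_inside :: "box \<Rightarrow> box \<Rightarrow> bool" where
  "strictly_inside A B \<longleftrightarrow> (case A of (a1, a2, a3, a4) \<Rightarrow> case B of (b1, b2, b3, b4) \<Rightarrow>
     b1 < a1 \<and> a2 < b2 \<and> b3 < a3 \<and> a4 < b4)"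

definition box_height :: "box \<Rightarrow> real" where
  "box_height A = (case A of (a1, a2, a3, a4) \<Rightarrow> a4 - a3)"

lemma mem_frame:
  "(x, y) \<in> frame (a1, a2, a3, a4) \<longleftrightarrow>
     (x = a1 \<and> a3 \<le> y \<and> y \<le> a4) \<or> (x = a2 \<and> a3 \<le> y \<and> y \<le> a4) \<or>
     (y = a3 \<and> a1 \<le> x \<and> x \<le> a2) \<or> (y = a4 \<and> a1 \<le> x \<and> x \<le> a2)"
  by (auto simp: frame_def left_side_def right_side_def top_side_def bottom_side_def)

lemma mem_left_side: "(x, y) \<in> left_side (a1, a2, a3, a4) \<longleftrightarrow> x = a1 \<and> a3 \<le> y \<and> y \<le> a4"
  by (auto simp: left_side_def)

lemma mem_right_side: "(x, y) \<in> right_side (a1, a2, a3, a4) \<longleftrightarrow> x = a2 \<and> a3 \<le> y \<and> y \<le> a4"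
  by (auto simp: right_side_def)

lemma mem_top_side: "(x, y) \<in> top_side (a1, a2, a3, a4) \<longleftrightarrow> y = a4 \<and> a1 \<le> x \<and> x \<le> a2"
  by (auto simp: top_side_def)

lemma mem_bottom_side: "(x, y) \<in> bottom_side (a1, a2, a3, a4) \<longleftrightarrow> y = a3 \<and> a1 \<le> x \<and> x \<le> a2"
  by (auto simp: bottom_side_def)

lemma mem_corners:
  "p \<in> corners (a1, a2, a3, a4) \<longleftrightarrow> p = (a1, a3) \<or> p = (a1, a4) \<or> p = (a2, a3) \<or> p = (a2, a4)"
  by (auto simp: corners_def)

lemma pierces_height_less: "pierces A B \<Longrightarrow> box_height B < box_height A"
  by (cases A; cases B) (auto simp: pierces_def box_height_def)

lemma strictly_inside_asym: "strictly_inside A B \<Longrightarrow> \<not> strictly_inside B A"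
  by (cases A; cases B) (auto simp: strictly_inside_def)

lemma right_side_crossing_pierces:
  assumes "valid_box A" "valid_box B"
    and "right_side A \<inter> top_side B \<noteq> {}" "right_side A \<inter> bottom_side B \<noteq> {}"
    and corners_A: "corners A \<inter> frame B = {}" and corners_B: "corners B \<inter> frame A = {}"
    and left_A: "left_side A \<inter> frame B = {}"
  shows "pierces A B"
proof -
  obtain a1 a2 a3 a4 where A: "A = (a1, a2, a3, a4)" by (cases A) auto
  obtain b1 b2 b3 b4 where B: "B = (b1, b2, b3, b4)" by (cases B) auto
  have v: "a1 < a2" "a3 < a4" "b1 < b2" "b3 < b4"
    using assms(1,2) A B by (auto simp: valid_box_def)
  have top: "b1 \<le> a2" "a2 \<le> b2" "a3 \<le> b4" "b4 \<le> a4"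
    using assms(3) A B by (auto simp: right_side_def top_side_def)
  have bottom: "a3 \<le> b3" "b3 \<le> a4"
    using assms(4) A B by (auto simp: right_side_def bottom_side_def)
  have "a2 \<noteq> b1" using equals0D[OF corners_B, of "(b1, b4)"] A B v top bottom
    by (simp add: mem_frame mem_corners)
  moreover have "a2 \<noteq> b2" using equals0D[OF corners_B, of "(b2, b4)"] A B v top bottom
    by (simp add: mem_frame mem_corners)
  moreover have "b4 \<noteq> a4" using equals0D[OF corners_A, of "(a2, a4)"] A B v top bottom
    by (simp add: mem_frame mem_corners)
  moreover have "b3 \<noteq> a3" using equals0D[OF corners_A, of "(a2, a3)"] A B v top bottom
    by (simp add: mem_frame mem_corners)
  moreover have "a1 < b1" using equals0D[OF left_A, of "(a1, b4)"] A B v top bottom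
    by (simp add: mem_frame mem_left_side; smt (verit))
  ultimately show ?thesis using A B v top bottom by (auto simp: pierces_def)
qed

lemma horizontal_crossing_hits_corner:
  assumes "valid_box A" "valid_box B" "p \<in> frame A" "p \<in> frame B"
    and "p \<notin> left_side A" "p \<notin> right_side A" "p \<notin> left_side B" "p \<notin> right_side B"
  shows "corners A \<inter> frame B \<noteq> {} \<or> corners B \<inter> frame A \<noteq> {}"
proof -
  obtain a1 a2 a3 a4 where A: "A = (a1, a2, a3, a4)" by (cases A) auto
  obtain b1 b2 b3 b4 where B: "B = (b1, b2, b3, b4)" by (cases B) auto
  obtain x y where xy: "p = (x, y)" by (cases p) auto
  have v: "a1 < a2" "a3 < a4" "b1 < b2" "b3 < b4"
    using assms(1,2) A B by (auto simp: valid_box_def)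
  have on_A: "(y = a3 \<or> y = a4) \<and> a1 \<le> x \<and> x \<le> a2"
    using assms(3,5,6) A xy
    by (auto simp: frame_def mem_left_side mem_right_side mem_top_side mem_bottom_side)
  have on_B: "(y = b3 \<or> y = b4) \<and> b1 \<le> x \<and> x \<le> b2"
    using assms(4,7,8) B xy
    by (auto simp: frame_def mem_left_side mem_right_side mem_top_side mem_bottom_side)
  show ?thesis
  proof (cases "a1 \<le> b1")
    case True
    then have "(b1, y) \<in> corners B \<inter> frame A" using A B on_A on_B v
      by (simp add: mem_frame mem_corners; smt (verit))
    then show ?thesis by blast
  next
    case False
    then have "(a1, y) \<in> corners A \<inter> frame B" using A B on_A on_B v
      by (simp add: mem_frame mem_corners; smt (verit))
    then show ?thesis by blast
  qed
qed

lemma touching_frames_pierce: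
  assumes "valid_box A" "valid_box B" "frame A \<inter> frame B \<noteq> {}"
    and corners: "corners A \<inter> frame B = {}" "corners B \<inter> frame A = {}"
    and left: "left_side A \<inter> frame B = {}" "left_side B \<inter> frame A = {}"
    and right_A: "right_side A \<inter> frame B \<noteq> {} \<Longrightarrow>
      right_side A \<inter> top_side B \<noteq> {} \<and> right_side A \<inter> bottom_side B \<noteq> {}"
    and right_B: "right_side B \<inter> frame A \<noteq> {} \<Longrightarrow>
      right_side B \<inter> top_side A \<noteq> {} \<and> right_side B \<inter> bottom_side A \<noteq> {}"
  shows "pierces A B \<or> pierces B A"
proof -
  obtain p where p: "p \<in> frame A" "p \<in> frame B" using assms(3) by blast
  have "p \<notin> left_side A" "p \<notin> left_side B" using left p by blast+
  then consider "right_side A \<inter> frame B \<noteq> {}" | "right_side B \<inter> frame A \<noteq> {}"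
    using horizontal_crossing_hits_corner[OF assms(1,2) p] corners p by blast
  then show ?thesis
    using right_side_crossing_pierces[of A B] right_side_crossing_pierces[of B A]
      right_A right_B assms by cases blast+
qed

lemma strictly_inside_if_pierce_same:
  fixes a1 a2 a3 a4 b1 b2 b3 b4 c1 c2 c3 c4 :: real
  assumes v: "a1 < a2" "a3 < a4" "b1 < b2" "b3 < b4" "c1 < c2" "c3 < c4"
    and pA: "pierces (a1, a2, a3, a4) (c1, c2, c3, c4)"
    and pB: "pierces (b1, b2, b3, b4) (c1, c2, c3, c4)"
    and d: "frame (a1, a2, a3, a4) \<inter> frame (b1, b2, b3, b4) = {}"
    and le: "a2 \<le> b2"
  shows "strictly_inside (a1, a2, a3, a4) (b1, b2, b3, b4)"
proof -
  note p = pA[unfolded pierces_def, simplified] pB[unfolded pierces_def, simplified]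
  have "a2 \<noteq> b2" using equals0D[OF d, of "(a2, c3)"] v p by (simp add: mem_frame; smt (verit))
  moreover have "a4 < b4" using equals0D[OF d, of "(a2, b4)"] v p le
    by (simp add: mem_frame; smt (verit))
  moreover have "b3 < a3" using equals0D[OF d, of "(a2, b3)"] v p le
    by (simp add: mem_frame; smt (verit))
  moreover have "b1 < a1" using equals0D[OF d, of "(b1, a4)"] v p le \<open>a4 < b4\<close> \<open>b3 < a3\<close>
    by (simp add: mem_frame; smt (verit))
  ultimately show ?thesis using le by (auto simp: strictly_inside_def)
qed

lemma pierce_same_nested:
  assumes "valid_box A" "valid_box B" "valid_box C" "pierces A C" "pierces B C"
    and "frame A \<inter> frame B = {}"
  shows "strictly_inside A B \<or> strictly_inside B A"
proof -
  obtain a1 a2 a3 a4 where A: "A = (a1, a2, a3, a4)" by (cases A) auto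
  obtain b1 b2 b3 b4 where B: "B = (b1, b2, b3, b4)" by (cases B) auto
  obtain c1 c2 c3 c4 where C: "C = (c1, c2, c3, c4)" by (cases C) auto
  show ?thesis
  proof (cases "a2 \<le> b2")
    case True
    then show ?thesis using strictly_inside_if_pierce_same[of a1 a2 a3 a4 b1 b2 b3 b4 c1 c2 c3 c4]
      assms A B C by (auto simp: valid_box_def)
  next
    case False
    then show ?thesis using strictly_inside_if_pierce_same[of b1 b2 b3 b4 a1 a2 a3 a4 c1 c2 c3 c4]
      assms A B C by (auto simp: valid_box_def Int_commute)
  qed
qed

lemma strictly_inside_along_pierce:
  assumes "valid_box W" "valid_box A" "valid_box B" "strictly_inside A W"
    and "pierces A B \<or> pierces B A" and d: "frame B \<inter> frame W = {}"
  shows "strictly_inside B W"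
proof -
  obtain a1 a2 a3 a4 where A: "A = (a1, a2, a3, a4)" by (cases A) auto
  obtain b1 b2 b3 b4 where B: "B = (b1, b2, b3, b4)" by (cases B) auto
  obtain w1 w2 w3 w4 where W: "W = (w1, w2, w3, w4)" by (cases W) auto
  have v: "a1 < a2" "a3 < a4" "b1 < b2" "b3 < b4" "w1 < w2" "w3 < w4"
    using assms(1-3) A B W by (auto simp: valid_box_def)
  have i: "w1 < a1" "a2 < w2" "w3 < a3" "a4 < w4"
    using assms(4) A W by (auto simp: strictly_inside_def)
  note d = d[unfolded B W]
  from assms(5) show ?thesis
  proof
    assume "pierces A B"
    then have p: "a1 < b1" "b1 < a2" "a2 < b2" "a3 < b3" "b4 < a4" using A B by (auto simp: pierces_def)
    have "b2 < w2" using equals0D[OF d, of "(w2, b3)"] v i p by (simp add: mem_frame; smt (verit))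
    then show ?thesis using v i p A B W by (auto simp: strictly_inside_def)
  next
    assume "pierces B A"
    then have p: "b1 < a1" "a1 < b2" "b2 < a2" "b3 < a3" "a4 < b4" using A B by (auto simp: pierces_def)
    have "b4 < w4" using equals0D[OF d, of "(b2, w4)"] v i p by (simp add: mem_frame; smt (verit))
    moreover have "w3 < b3" using equals0D[OF d, of "(b2, w3)"] v i p by (simp add: mem_frame; smt (verit))
    moreover have "w1 < b1" using equals0D[OF d, of "(w1, b4)"] v i p \<open>b4 < w4\<close> \<open>w3 < b3\<close>
      by (simp add: mem_frame; smt (verit))
    ultimately show ?thesis using v i p A B W by (auto simp: strictly_inside_def)
  qed
qed

definition closed_nbhd :: "('a \<Rightarrow> 'a \<Rightarrow> bool) \<Rightarrow> 'a \<Rightarrow> 'a set" where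
  "closed_nbhd E w = {z. z = w \<or> E w z}"

lemma mem_closed_nbhd [simp]: "z \<in> closed_nbhd E w \<longleftrightarrow> z = w \<or> E w z"
  by (simp add: closed_nbhd_def)

definition induced_edge :: "('a \<Rightarrow> 'a \<Rightarrow> bool) \<Rightarrow> 'a set \<Rightarrow> 'a \<Rightarrow> 'a \<Rightarrow> bool" where
  "induced_edge E U x y \<longleftrightarrow> x \<in> U \<and> y \<in> U \<and> E x y"

definition connected_in :: "('a \<Rightarrow> 'a \<Rightarrow> bool) \<Rightarrow> 'a set \<Rightarrow> bool" where
  "connected_in E U \<longleftrightarrow> (\<forall>x\<in>U. \<forall>y\<in>U. (induced_edge E U)\<^sup>*\<^sup>* x y)"

definition two_nonadjacent_neighbours_in :: "('a \<Rightarrow> 'a \<Rightarrow> bool) \<Rightarrow> 'a set \<Rightarrow> bool" where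
  "two_nonadjacent_neighbours_in E S \<longleftrightarrow>
     (\<forall>s\<in>S. \<exists>u\<in>S. \<exists>v\<in>S. E s u \<and> E s v \<and> s \<noteq> u \<and> s \<noteq> v \<and> u \<noteq> v \<and> \<not> E u v)"

locale restricted_frame_rep =
  fixes V :: "'a set" and E :: "'a \<Rightarrow> 'a \<Rightarrow> bool" and F :: "'a \<Rightarrow> box"
  assumes valid: "v \<in> V \<Longrightarrow> valid_box (F v)"
    and adjacent_iff_touch:
      "u \<in> V \<Longrightarrow> v \<in> V \<Longrightarrow> u \<noteq> v \<Longrightarrow> E u v \<longleftrightarrow> frame (F u) \<inter> frame (F v) \<noteq> {}"
    and corners_free: "u \<in> V \<Longrightarrow> v \<in> V \<Longrightarrow> u \<noteq> v \<Longrightarrow> corners (F u) \<inter> frame (F v) = {}"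
    and left_side_free: "u \<in> V \<Longrightarrow> v \<in> V \<Longrightarrow> u \<noteq> v \<Longrightarrow> left_side (F u) \<inter> frame (F v) = {}"
    and right_side_crossing: "u \<in> V \<Longrightarrow> v \<in> V \<Longrightarrow> u \<noteq> v \<Longrightarrow>
      right_side (F u) \<inter> frame (F v) \<noteq> {} \<Longrightarrow>
      right_side (F u) \<inter> top_side (F v) \<noteq> {} \<and> right_side (F u) \<inter> bottom_side (F v) \<noteq> {}"

lemma restricted_frame_graph_imp_rep:
  "restricted_frame_graph V E \<Longrightarrow> \<exists>F. restricted_frame_rep V E F"
proof -
  assume "restricted_frame_graph V E"
  then obtain F where F: "\<forall>v\<in>V. valid_box (F v)"
    "\<forall>u\<in>V. \<forall>v\<in>V. u \<noteq> v \<longrightarrow> (E u v \<longleftrightarrow> frame (F u) \<inter> frame (F v) \<noteq> {})"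
    "\<forall>u\<in>V. \<forall>v\<in>V. u \<noteq> v \<longrightarrow> corners (F u) \<inter> frame (F v) = {}"
    "\<forall>u\<in>V. \<forall>v\<in>V. u \<noteq> v \<longrightarrow> left_side (F u) \<inter> frame (F v) = {}"
    "\<forall>u\<in>V. \<forall>v\<in>V. u \<noteq> v \<longrightarrow> right_side (F u) \<inter> frame (F v) \<noteq> {} \<longrightarrow>
       right_side (F u) \<inter> top_side (F v) \<noteq> {} \<and> right_side (F u) \<inter> bottom_side (F v) \<noteq> {}"
    unfolding restricted_frame_graph_def by (elim exE conjE) (rule that)
  then have "restricted_frame_rep V E F" by (simp add: restricted_frame_rep_def)
  then show ?thesis by blast
qed

context restricted_frame_rep
begin

lemma adjacent_sym: "u \<in> V \<Longrightarrow> v \<in> V \<Longrightarrow> E u v \<Longrightarrow> E v u"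
  by (metis adjacent_iff_touch inf_commute)

lemma adjacent_pierce:
  assumes "u \<in> V" "v \<in> V" "u \<noteq> v" "E u v"
  shows "pierces (F u) (F v) \<or> pierces (F v) (F u)"
proof (rule touching_frames_pierce)
  show "valid_box (F u)" "valid_box (F v)" using valid assms by auto
  show "frame (F u) \<inter> frame (F v) \<noteq> {}" using adjacent_iff_touch assms by blast
  show "corners (F u) \<inter> frame (F v) = {}" "corners (F v) \<inter> frame (F u) = {}"
    using corners_free assms by auto
  show "left_side (F u) \<inter> frame (F v) = {}" "left_side (F v) \<inter> frame (F u) = {}"
    using left_side_free assms by auto
  show "right_side (F u) \<inter> top_side (F v) \<noteq> {} \<and> right_side (F u) \<inter> bottom_side (F v) \<noteq> {}"
    if "right_side (F u) \<inter> frame (F v) \<noteq> {}"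
    using right_side_crossing assms that by blast
  show "right_side (F v) \<inter> top_side (F u) \<noteq> {} \<and> right_side (F v) \<inter> bottom_side (F u) \<noteq> {}"
    if "right_side (F v) \<inter> frame (F u) \<noteq> {}"
    using right_side_crossing assms that by auto
qed

lemma nonadjacent_frames_disjoint:
  "u \<in> V \<Longrightarrow> v \<in> V \<Longrightarrow> v \<notin> closed_nbhd E u \<Longrightarrow> frame (F u) \<inter> frame (F v) = {}"
  using adjacent_iff_touch by auto

lemma strictly_inside_spreads:
  assumes "w \<in> V" "strictly_inside (F a) (F w)"
    and "(induced_edge E (V - closed_nbhd E w))\<^sup>*\<^sup>* a z"
  shows "strictly_inside (F z) (F w)"
  using assms(3)
proof (induction rule: rtranclp_induct)
  case base
  then show ?case using assms(2) .
next
  case (step y z)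
  then have yz: "y \<in> V" "z \<in> V" "z \<notin> closed_nbhd E w" "E y z"
    by (auto simp: induced_edge_def)
  show ?case
  proof (cases "y = z")
    case False
    then show ?thesis
      using strictly_inside_along_pierce[OF _ _ _ step.IH adjacent_pierce[OF yz(1,2) False yz(4)]]
        nonadjacent_frames_disjoint[OF assms(1) yz(2,3)] valid yz assms(1)
      by (auto simp: Int_commute)
  qed (use step.IH in simp)
qed

text \<open>A vertex of least height in \<open>S\<close> is pierced by both of its non-adjacent neighbours,
whose disjoint frames must then be nested.\<close>
lemma nested_pair_in:
  assumes "S \<subseteq> V" "finite S" "S \<noteq> {}" "two_nonadjacent_neighbours_in E S"
  obtains w a where "w \<in> S" "a \<in> S" "a \<notin> closed_nbhd E w" "strictly_inside (F a) (F w)"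
proof -
  define s where "s = arg_min_on (box_height \<circ> F) S"
  have s: "s \<in> S" using arg_min_if_finite(1)[OF assms(2,3)] by (simp add: s_def)
  have lowest: "box_height (F s) \<le> box_height (F t)" if "t \<in> S" for t
    using arg_min_least[OF assms(2,3) that, of "box_height \<circ> F"] by (simp add: s_def)
  obtain u v where uv: "u \<in> S" "v \<in> S" "E s u" "E s v" "s \<noteq> u" "s \<noteq> v" "u \<noteq> v" "\<not> E u v"
    using assms(4) s unfolding two_nonadjacent_neighbours_in_def by blast
  have pierced: "pierces (F t) (F s)" if "t \<in> S" "s \<noteq> t" "E s t" for t
    using adjacent_pierce[of s t] pierces_height_less[of "F s" "F t"] lowest[of t] that s assms(1)
    by fastforce
  have "strictly_inside (F u) (F v) \<or> strictly_inside (F v) (F u)"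
    using pierce_same_nested[OF _ _ _ pierced[OF uv(1,5,3)] pierced[OF uv(2,6,4)]]
      nonadjacent_frames_disjoint[of u v] valid uv s assms(1) by auto
  moreover have "u \<notin> closed_nbhd E v" "v \<notin> closed_nbhd E u"
    using uv adjacent_sym[of v u] assms(1) by auto
  ultimately show ?thesis using that uv(1,2) by blast
qed

lemma closed_nbhd_complement_disconnected:
  assumes "V \<noteq> {}"
    and avoiding: "\<And>w. w \<in> V \<Longrightarrow>
      \<exists>S \<subseteq> V - closed_nbhd E w. finite S \<and> S \<noteq> {} \<and> two_nonadjacent_neighbours_in E S"
  shows "\<exists>w\<in>V. \<not> connected_in E (V - closed_nbhd E w)"
proof (rule ccontr)
  assume "\<not> ?thesis"
  then have connected: "connected_in E (V - closed_nbhd E w)" if "w \<in> V" for w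
    using that by blast
  have nested: "\<exists>w a. w \<in> V - closed_nbhd E w0 \<and> a \<in> V - closed_nbhd E w \<and>
      strictly_inside (F a) (F w)" if "w0 \<in> V" for w0
  proof -
    obtain S where S: "S \<subseteq> V - closed_nbhd E w0" "finite S" "S \<noteq> {}"
      "two_nonadjacent_neighbours_in E S"
      using avoiding \<open>w0 \<in> V\<close> by blast
    then have "S \<subseteq> V" by blast
    then obtain w a where "w \<in> S" "a \<in> S" "a \<notin> closed_nbhd E w" "strictly_inside (F a) (F w)"
      using S(2-4) by (rule nested_pair_in)
    then show ?thesis using S(1) by blast
  qed
  have inside_all: "strictly_inside (F z) (F w)"
    if "a \<in> V - closed_nbhd E w" "strictly_inside (F a) (F w)" "z \<in> V - closed_nbhd E w" "w \<in> V"
    for w a z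
    using strictly_inside_spreads connected[unfolded connected_in_def] that by blast
  obtain w0 where "w0 \<in> V" using assms(1) by blast
  then obtain w1 a1 where w1: "w1 \<in> V" "a1 \<in> V - closed_nbhd E w1" "strictly_inside (F a1) (F w1)"
    using nested by blast
  then obtain w2 a2 where w2: "w2 \<in> V - closed_nbhd E w1" "a2 \<in> V - closed_nbhd E w2"
    "strictly_inside (F a2) (F w2)"
    using nested by blast
  have "w1 \<in> V - closed_nbhd E w2" using w1(1) w2(1) adjacent_sym[of w2 w1] by auto
  then have "strictly_inside (F w1) (F w2)" using inside_all w2 by blast
  moreover have "strictly_inside (F w2) (F w1)" using inside_all w1 w2(1) by blast
  ultimately show False using strictly_inside_asym by blast
qed

end

lemma nth_mem_inner:
  assumes "0 < k" "k < length p - 1"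
  shows "p ! k \<in> set (inner p)"
proof -
  have "butlast (tl p) ! (k - 1) = p ! k" using assms by (simp add: nth_butlast nth_tl)
  moreover have "k - 1 < length (butlast (tl p))" using assms by simp
  ultimately show ?thesis unfolding inner_def by (metis nth_mem)
qed

lemma mem_inner_obtain:
  assumes "x \<in> set (inner p)"
  obtains k where "0 < k" "k < length p - 1" "x = p ! k"
proof -
  obtain i where i: "i < length (butlast (tl p))" "x = butlast (tl p) ! i"
    using assms unfolding inner_def by (auto simp: in_set_conv_nth)
  then have "x = p ! Suc i" by (simp add: nth_butlast nth_tl)
  then show ?thesis using i by (intro that[of "Suc i"]) auto
qed

lemma ex_other_index: "\<exists>f::nat. f < 4 \<and> f \<noteq> c \<and> f \<noteq> e \<and> f \<noteq> k"
  by (rule exI[of _ "if 0 \<notin> {c, e, k} then 0 else if 1 \<notin> {c, e, k} then 1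
    else if 2 \<notin> {c, e, k} then 2 else 3"]) auto

locale K4_subdivision =
  fixes V :: "'a set" and E :: "'a \<Rightarrow> 'a \<Rightarrow> bool"
    and b :: "nat \<Rightarrow> 'a" and P :: "nat \<Rightarrow> nat \<Rightarrow> 'a list"
  assumes branch_inj: "inj_on b {0..<4}"
    and path_distinct: "i < j \<Longrightarrow> j < 4 \<Longrightarrow> distinct (P i j)"
    and path_length: "i < j \<Longrightarrow> j < 4 \<Longrightarrow> 4 \<le> length (P i j)"
    and path_hd: "i < j \<Longrightarrow> j < 4 \<Longrightarrow> hd (P i j) = b i"
    and path_last: "i < j \<Longrightarrow> j < 4 \<Longrightarrow> last (P i j) = b j"
    and inner_branch_disjoint: "i < j \<Longrightarrow> j < 4 \<Longrightarrow> set (inner (P i j)) \<inter> b ` {0..<4} = {}"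
    and inner_disjoint: "i < j \<Longrightarrow> j < 4 \<Longrightarrow> k < l \<Longrightarrow> l < 4 \<Longrightarrow> (i, j) \<noteq> (k, l) \<Longrightarrow>
      set (inner (P i j)) \<inter> set (inner (P k l)) = {}"
    and V_eq: "V = (\<Union>i\<in>{0..<4}. \<Union>j\<in>{i<..<4}. set (P i j))"
    and E_iff: "E u v \<longleftrightarrow> (\<exists>i j n. i < j \<and> j < 4 \<and> Suc n < length (P i j) \<and>
      ((u = P i j ! n \<and> v = P i j ! Suc n) \<or> (v = P i j ! n \<and> u = P i j ! Suc n)))"

lemma ge2_subdivision_K4_imp_locale:
  "ge2_subdivision_K4 V E \<Longrightarrow> \<exists>b P. K4_subdivision V E b P"
proof -
  assume "ge2_subdivision_K4 V E"
  then obtain b :: "nat \<Rightarrow> 'a" and P :: "nat \<Rightarrow> nat \<Rightarrow> 'a list"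
    where inj: "inj_on b {0..<4}"
    and paths: "\<forall>i j. i < j \<and> j < 4 \<longrightarrow> distinct (P i j) \<and> length (P i j) \<ge> 4 \<and>
      hd (P i j) = b i \<and> last (P i j) = b j \<and> set (inner (P i j)) \<inter> b ` {0..<4} = {}"
    and disjoint: "\<forall>i j k l. i < j \<and> j < 4 \<and> k < l \<and> l < 4 \<and> (i, j) \<noteq> (k, l) \<longrightarrow>
      set (inner (P i j)) \<inter> set (inner (P k l)) = {}"
    and vertices: "V = (\<Union>i\<in>{0..<4}. \<Union>j\<in>{i<..<4}. set (P i j))"
    and edges: "\<forall>u v. E u v \<longleftrightarrow> (\<exists>i j n. i < j \<and> j < 4 \<and> Suc n < length (P i j) \<and>
      ((u = P i j ! n \<and> v = P i j ! Suc n) \<or> (v = P i j ! n \<and> u = P i j ! Suc n)))"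
    unfolding ge2_subdivision_K4_def by (elim exE conjE) (rule that)
  have "K4_subdivision V E b P"
  proof
    show "E u v \<longleftrightarrow> (\<exists>i j n. i < j \<and> j < 4 \<and> Suc n < length (P i j) \<and>
      ((u = P i j ! n \<and> v = P i j ! Suc n) \<or> (v = P i j ! n \<and> u = P i j ! Suc n)))" for u v
      using edges by (rule spec2)
  qed (use inj paths disjoint vertices in simp_all)
  then show ?thesis by blast
qed

context K4_subdivision
begin

abbreviation len :: "nat \<Rightarrow> nat \<Rightarrow> nat" where
  "len i j \<equiv> length (P i j)"

lemma path_nth_first: "i < j \<Longrightarrow> j < 4 \<Longrightarrow> P i j ! 0 = b i"
  using path_hd path_length by (metis hd_conv_nth list.size(3) not_numeral_le_zero)

lemma path_nth_last: "i < j \<Longrightarrow> j < 4 \<Longrightarrow> P i j ! (len i j - 1) = b j"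
  using path_last path_length by (metis last_conv_nth list.size(3) not_numeral_le_zero)

lemma path_nth_adjacent: "i < j \<Longrightarrow> j < 4 \<Longrightarrow> Suc n < len i j \<Longrightarrow> E (P i j ! n) (P i j ! Suc n)"
  using E_iff by blast

lemma path_nth_in_V: "i < j \<Longrightarrow> j < 4 \<Longrightarrow> k < len i j \<Longrightarrow> P i j ! k \<in> V"
  unfolding V_eq by (intro UN_I[of i] UN_I[of j]) auto

lemma in_V_obtain:
  assumes "x \<in> V"
  obtains i j k where "i < j" "j < 4" "k < len i j" "x = P i j ! k"
  using assms unfolding V_eq by (auto simp: in_set_conv_nth)

lemma branch_in_V: "a < 4 \<Longrightarrow> b a \<in> V"
proof (cases "a = 0")
  case True
  have "0 < len 0 1" using path_length[of 0 1] by linarith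
  then show ?thesis using path_nth_in_V[of 0 1 0] path_nth_first[of 0 1] True by simp
next
  case False
  assume "a < 4"
  moreover have "len 0 a - 1 < len 0 a" using path_length[of 0 a] False \<open>a < 4\<close> by simp
  ultimately show ?thesis using path_nth_in_V[of 0 a] path_nth_last[of 0 a] False by (metis gr0I)
qed

lemma finite_V: "finite V"
  unfolding V_eq by auto

lemma E_sym: "E u v \<Longrightarrow> E v u"
  using E_iff by blast

lemma E_irrefl: "E u v \<Longrightarrow> u \<noteq> v"
  using E_iff path_distinct by (metis n_not_Suc_n nth_eq_iff_index_eq Suc_lessD)

lemma interior_vertex_unique:
  assumes "i < j" "j < 4" "0 < k" "k < len i j - 1" "i' < j'" "j' < 4" "k' < len i' j'"
    and eq: "P i j ! k = P i' j' ! k'"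
  shows "i' = i \<and> j' = j \<and> k' = k"
proof -
  have inner: "P i j ! k \<in> set (inner (P i j))" using nth_mem_inner assms by blast
  then have not_branch: "P i j ! k \<notin> b ` {0..<4}" using inner_branch_disjoint assms(1,2) by blast
  have "k' \<noteq> 0" using not_branch eq path_nth_first[OF assms(5,6)] assms(5,6) by force
  moreover have "k' \<noteq> len i' j' - 1" using not_branch eq path_nth_last[OF assms(5,6)] assms(6) by force
  ultimately have "0 < k'" "k' < len i' j' - 1" using assms(7) by auto
  then have "P i' j' ! k' \<in> set (inner (P i' j'))" by (rule nth_mem_inner)
  then have same: "i' = i \<and> j' = j"
    using inner_disjoint[OF assms(1,2,5,6)] inner eq by (metis disjoint_iff prod.inject)
  then show ?thesis using path_distinct[OF assms(1,2)] eq assms by (simp add: nth_eq_iff_index_eq)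
qed

lemma path_nth_eq_branch:
  assumes "i < j" "j < 4" "k < len i j" "a < 4" "P i j ! k = b a"
  shows "(k = 0 \<and> a = i) \<or> (k = len i j - 1 \<and> a = j)"
proof -
  have "\<not> (0 < k \<and> k < len i j - 1)"
  proof
    assume "0 < k \<and> k < len i j - 1"
    then have "P i j ! k \<in> set (inner (P i j))" by (intro nth_mem_inner) auto
    then show False using inner_branch_disjoint[OF assms(1,2)] assms(4,5) by auto
  qed
  then have "k = 0 \<or> k = len i j - 1" using assms(3) by auto
  then show ?thesis
    using assms path_nth_first[OF assms(1,2)] path_nth_last[OF assms(1,2)]
      inj_onD[OF branch_inj, of a] by auto
qed

lemma interior_neighbour_cases:
  assumes "i < j" "j < 4" "0 < k" "k < len i j - 1" "E (P i j ! k) y"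
  shows "y = P i j ! (k - 1) \<or> y = P i j ! (k + 1)"
proof -
  obtain i' j' n where n: "i' < j'" "j' < 4" "Suc n < len i' j'"
    "(P i j ! k = P i' j' ! n \<and> y = P i' j' ! Suc n) \<or> (y = P i' j' ! n \<and> P i j ! k = P i' j' ! Suc n)"
    using assms(5) E_iff by blast
  from n(4) show ?thesis
  proof
    assume "P i j ! k = P i' j' ! n \<and> y = P i' j' ! Suc n"
    then show ?thesis using interior_vertex_unique[OF assms(1-4) n(1,2), of n] n(3) by auto
  next
    assume "y = P i' j' ! n \<and> P i j ! k = P i' j' ! Suc n"
    then show ?thesis using interior_vertex_unique[OF assms(1-4) n(1,2), of "Suc n"] n(3) by auto
  qed
qed

lemma branch_neighbour_cases:
  assumes "a < 4" "E (b a) y"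
  obtains i j where "i < j" "j < 4" "(a = i \<and> y = P i j ! 1) \<or> (a = j \<and> y = P i j ! (len i j - 2))"
proof -
  obtain i j n where n: "i < j" "j < 4" "Suc n < len i j"
    "(b a = P i j ! n \<and> y = P i j ! Suc n) \<or> (y = P i j ! n \<and> b a = P i j ! Suc n)"
    using assms(2) E_iff by blast
  from n(4) have "(a = i \<and> y = P i j ! 1) \<or> (a = j \<and> y = P i j ! (len i j - 2))"
  proof
    assume "b a = P i j ! n \<and> y = P i j ! Suc n"
    then show ?thesis using path_nth_eq_branch[OF n(1,2), of n a] n(3) assms(1) by auto
  next
    assume yn: "y = P i j ! n \<and> b a = P i j ! Suc n"
    then have "Suc n = len i j - 1" "a = j"
      using path_nth_eq_branch[OF n(1,2), of "Suc n" a] n(3) assms(1) by auto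
    moreover from this have "n = len i j - 2" by linarith
    ultimately show ?thesis using yn by simp
  qed
  then show ?thesis using n(1,2) that by blast
qed

lemma vertex_cases:
  assumes "w \<in> V"
  obtains (branch) a where "a < 4" "w = b a"
    | (interior) i j m where "i < j" "j < 4" "0 < m" "m < len i j - 1" "w = P i j ! m"
proof -
  obtain i j k where k: "i < j" "j < 4" "k < len i j" "w = P i j ! k"
    using assms by (rule in_V_obtain)
  consider "k = 0" | "k = len i j - 1" | "0 < k" "k < len i j - 1" using k(3) by linarith
  then show ?thesis
  proof cases
    case 1
    then show ?thesis by (intro branch[of i]) (use k path_nth_first[OF k(1,2)] in auto)
  next
    case 2
    then show ?thesis by (intro branch[of j]) (use k path_nth_last[OF k(1,2)] in auto)
  next
    case 3
    then show ?thesis by (intro interior[of i j k]) (use k in auto)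
  qed
qed

lemma branch_closed_nbhd_on_path:
  assumes "a < 4" "c < e" "e < 4" "t < len c e" "P c e ! t \<in> closed_nbhd E (b a)"
  shows "(a = c \<and> t \<le> 1) \<or> (a = e \<and> len c e - 2 \<le> t)"
proof (cases "P c e ! t = b a")
  case True
  then show ?thesis using path_nth_eq_branch[OF assms(2-4,1)] by auto
next
  case False
  then have "E (b a) (P c e ! t)" using assms(5) by auto
  then obtain i j where ij: "i < j" "j < 4"
    "(a = i \<and> P c e ! t = P i j ! 1) \<or> (a = j \<and> P c e ! t = P i j ! (len i j - 2))"
    by (rule branch_neighbour_cases[OF assms(1)])
  have "4 \<le> len i j" using path_length[OF ij(1,2)] .
  then show ?thesis
    using ij(3) interior_vertex_unique[OF ij(1,2), of 1 c e t]
      interior_vertex_unique[OF ij(1,2), of "len i j - 2" c e t] assms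
    by fastforce
qed

lemma interior_closed_nbhd_obtain:
  assumes "i < j" "j < 4" "0 < m" "m < len i j - 1" "z \<in> closed_nbhd E (P i j ! m)"
  obtains m' where "m - 1 \<le> m'" "m' \<le> m + 1" "m' < len i j" "z = P i j ! m'"
proof -
  have "z = P i j ! m \<or> z = P i j ! (m - 1) \<or> z = P i j ! (m + 1)"
    using interior_neighbour_cases[OF assms(1-4)] assms(5) by auto
  moreover have "m + 1 < len i j" using assms(4) by linarith
  ultimately show ?thesis using that[of m] that[of "m - 1"] that[of "m + 1"] by force
qed

lemma interior_closed_nbhd_on_path:
  assumes "i < j" "j < 4" "0 < m" "m < len i j - 1" "c < e" "e < 4" "t < len c e"
    and "P c e ! t \<in> closed_nbhd E (P i j ! m)"
  shows "(c = i \<and> e = j \<and> m - 1 \<le> t \<and> t \<le> m + 1) \<or> ((c, e) \<noteq> (i, j) \<and> (t = 0 \<or> t = len c e - 1))"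
proof -
  obtain m' where m': "m - 1 \<le> m'" "m' \<le> m + 1" "m' < len i j" "P c e ! t = P i j ! m'"
    using assms(1-4,8) by (rule interior_closed_nbhd_obtain)
  show ?thesis
  proof (cases "(c, e) = (i, j)")
    case True
    then have "t = m'" using path_distinct[OF assms(1,2)] m' assms(7) by (auto simp: nth_eq_iff_index_eq)
    then show ?thesis using True m' by auto
  next
    case False
    have "\<not> (0 < t \<and> t < len c e - 1)"
      using interior_vertex_unique[OF assms(5,6), of t i j m'] False assms m' by auto
    then show ?thesis using False assms(7) by auto
  qed
qed

lemma interior_closed_nbhd_branch:
  assumes "i < j" "j < 4" "0 < m" "m < len i j - 1" "a < 4" "b a \<in> closed_nbhd E (P i j ! m)"
  shows "(a = i \<and> m = 1) \<or> (a = j \<and> m = len i j - 2)"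
proof -
  obtain m' where m': "m - 1 \<le> m'" "m' \<le> m + 1" "m' < len i j" "b a = P i j ! m'"
    using assms(1-4,6) by (rule interior_closed_nbhd_obtain)
  then have "(m' = 0 \<and> a = i) \<or> (m' = len i j - 1 \<and> a = j)"
    using path_nth_eq_branch[OF assms(1,2) m'(3) assms(5)] by simp
  then show ?thesis using m' assms(3,4) by auto
qed

lemma closed_nbhd_path_convex:
  assumes "w \<in> V" "c < e" "e < 4" "t1 \<le> k" "k \<le> t2" "t2 < len c e"
    and t1: "P c e ! t1 \<in> closed_nbhd E w" and t2: "P c e ! t2 \<in> closed_nbhd E w"
  shows "P c e ! k \<in> closed_nbhd E w"
proof (rule ccontr)
  assume k: "P c e ! k \<notin> closed_nbhd E w"
  then have "t1 < k" "k < t2" using assms(4,5) t1 t2 by (auto simp: le_less)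
  have "4 \<le> len c e" using path_length[OF assms(2,3)] .
  from assms(1) show False
  proof (cases rule: vertex_cases)
    case (branch a)
    then show False
      using branch_closed_nbhd_on_path[OF branch(1) assms(2,3), of t1]
        branch_closed_nbhd_on_path[OF branch(1) assms(2,3), of t2]
        t1 t2 assms(2) \<open>t1 < k\<close> \<open>k < t2\<close> assms(6) \<open>4 \<le> len c e\<close> by auto
  next
    case (interior i j m)
    have on_t1: "(c = i \<and> e = j \<and> m - 1 \<le> t1 \<and> t1 \<le> m + 1) \<or> ((c, e) \<noteq> (i, j) \<and> (t1 = 0 \<or> t1 = len c e - 1))"
      using interior_closed_nbhd_on_path[OF interior(1-4) assms(2,3), of t1] t1 interior(5) \<open>t1 < k\<close> \<open>k < t2\<close> assms(6)
      by auto
    have on_t2: "(c = i \<and> e = j \<and> m - 1 \<le> t2 \<and> t2 \<le> m + 1) \<or> ((c, e) \<noteq> (i, j) \<and> (t2 = 0 \<or> t2 = len c e - 1))"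
      using interior_closed_nbhd_on_path[OF interior(1-4) assms(2,3), of t2] t2 interior(5) assms(6)
      by auto
    show False
    proof (cases "(c, e) = (i, j)")
      case True
      then have "k = m" using on_t1 on_t2 \<open>t1 < k\<close> \<open>k < t2\<close> by auto
      then show False using k interior True by auto
    next
      case False
      then have "t1 = 0" "t2 = len c e - 1" using on_t1 on_t2 \<open>t1 < k\<close> \<open>k < t2\<close> assms(6) by auto
      then have "b c \<in> closed_nbhd E w" "b e \<in> closed_nbhd E w"
        using t1 t2 path_nth_first[OF assms(2,3)] path_nth_last[OF assms(2,3)] by auto
      then have "(c = i \<and> m = 1) \<or> (c = j \<and> m = len i j - 2)" "(e = i \<and> m = 1) \<or> (e = j \<and> m = len i j - 2)"
        using interior_closed_nbhd_branch[OF interior(1-4)] interior(5) assms(2,3) by auto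
      then show False using assms(2) interior(1) path_length[OF interior(1,2)] False by auto
    qed
  qed
qed

lemma induced_edge_rtranclp_sym:
  "(induced_edge E U)\<^sup>*\<^sup>* x y \<Longrightarrow> (induced_edge E U)\<^sup>*\<^sup>* y x"
proof -
  have "symp (induced_edge E U)" by (auto intro: sympI simp: induced_edge_def E_sym)
  then show "(induced_edge E U)\<^sup>*\<^sup>* x y \<Longrightarrow> (induced_edge E U)\<^sup>*\<^sup>* y x"
    by (metis symp_rtranclp sympD)
qed

lemma path_segment_connected:
  assumes "c < e" "e < 4" "hi < len c e" "lo \<le> hi" "\<And>t. lo \<le> t \<Longrightarrow> t \<le> hi \<Longrightarrow> P c e ! t \<in> U"
  shows "(induced_edge E U)\<^sup>*\<^sup>* (P c e ! lo) (P c e ! hi)"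
  using assms(3-5)
proof (induction hi)
  case (Suc hi)
  show ?case
  proof (cases "lo = Suc hi")
    case False
    then have "(induced_edge E U)\<^sup>*\<^sup>* (P c e ! lo) (P c e ! hi)" using Suc by simp
    moreover have "induced_edge E U (P c e ! hi) (P c e ! Suc hi)"
      using Suc.prems path_nth_adjacent[OF assms(1,2)] False by (auto simp: induced_edge_def)
    ultimately show ?thesis by (rule rtranclp.rtrancl_into_rtrancl)
  qed simp
qed simp

lemma path_outside_closed_nbhd:
  assumes "w \<in> V" "c < e" "e < 4" "b c \<notin> closed_nbhd E w" "b e \<notin> closed_nbhd E w"
    and "w \<notin> set (inner (P c e))" "t < len c e"
  shows "P c e ! t \<notin> closed_nbhd E w"
proof
  assume t: "P c e ! t \<in> closed_nbhd E w"
  from assms(1) show False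
  proof (cases rule: vertex_cases)
    case (branch a)
    then show False
      using branch_closed_nbhd_on_path[OF branch(1) assms(2,3,7)] t assms(4,5) by auto
  next
    case (interior i j m)
    have "w \<in> set (inner (P i j))" using nth_mem_inner interior by blast
    then have "(c, e) \<noteq> (i, j)" using assms(6) by auto
    then have "t = 0 \<or> t = len c e - 1"
      using interior_closed_nbhd_on_path[OF interior(1-4) assms(2,3,7)] t interior(5) by auto
    then show False
      using t assms(4,5) path_nth_first[OF assms(2,3)] path_nth_last[OF assms(2,3)] by auto
  qed
qed

text \<open>Paths are only given for \<open>c < e\<close>, so the path joining \<open>b c\<close> and \<open>b e\<close> is
\<open>P (min c e) (max c e)\<close>.\<close>
lemma branches_linked_outside_closed_nbhd:
  assumes "w \<in> V" "c < 4" "e < 4" "c \<noteq> e" "b c \<notin> closed_nbhd E w" "b e \<notin> closed_nbhd E w"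
    and "w \<notin> set (inner (P (min c e) (max c e)))"
  shows "(induced_edge E (V - closed_nbhd E w))\<^sup>*\<^sup>* (b c) (b e)"
proof -
  have linked: "(induced_edge E (V - closed_nbhd E w))\<^sup>*\<^sup>* (b c') (b e')"
    if ce: "c' < e'" "e' < 4" "b c' \<notin> closed_nbhd E w" "b e' \<notin> closed_nbhd E w"
      "w \<notin> set (inner (P c' e'))" for c' e'
  proof -
    have "4 \<le> len c' e'" using path_length ce(1,2) by blast
    then have "(induced_edge E (V - closed_nbhd E w))\<^sup>*\<^sup>* (P c' e' ! 0) (P c' e' ! (len c' e' - 1))"
      using path_segment_connected[OF ce(1,2), of "len c' e' - 1" 0 "V - closed_nbhd E w"]
        path_outside_closed_nbhd[OF assms(1) ce] path_nth_in_V[OF ce(1,2)] by auto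
    then show ?thesis using path_nth_first[OF ce(1,2)] path_nth_last[OF ce(1,2)] by simp
  qed
  show ?thesis
  proof (cases "c < e")
    case True
    then show ?thesis using linked assms by simp
  next
    case False
    then have "e < c" using assms(4) by simp
    then show ?thesis using linked[of e c] assms induced_edge_rtranclp_sym by simp
  qed
qed

lemma reaches_branch_outside_closed_nbhd:
  assumes "w \<in> V" "x \<in> V - closed_nbhd E w"
  obtains a where "a < 4" "b a \<in> V - closed_nbhd E w"
    "(induced_edge E (V - closed_nbhd E w))\<^sup>*\<^sup>* x (b a)"
proof -
  let ?U = "V - closed_nbhd E w"
  have "x \<in> V" using assms(2) by blast
  then obtain c e k where k: "c < e" "e < 4" "k < len c e" "x = P c e ! k"
    by (rule in_V_obtain)
  have outside: "P c e ! t \<in> ?U" if "t < len c e" "P c e ! t \<notin> closed_nbhd E w" for t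
    using path_nth_in_V[OF k(1,2)] that by blast
  have "(\<forall>t\<le>k. P c e ! t \<notin> closed_nbhd E w) \<or>
      (\<forall>t. k \<le> t \<longrightarrow> t < len c e \<longrightarrow> P c e ! t \<notin> closed_nbhd E w)"
    using closed_nbhd_path_convex[OF assms(1) k(1,2)] k assms(2) by blast
  then show ?thesis
  proof
    assume prefix: "\<forall>t\<le>k. P c e ! t \<notin> closed_nbhd E w"
    have "0 < len c e" using k(3) by linarith
    then have "b c \<in> ?U" using outside[of 0] prefix path_nth_first[OF k(1,2)] by auto
    moreover have "(induced_edge E ?U)\<^sup>*\<^sup>* (b c) x"
      using path_segment_connected[OF k(1,2,3), of 0 ?U] outside k path_nth_first[OF k(1,2)]
        prefix by auto
    ultimately show ?thesis using that[of c] induced_edge_rtranclp_sym k(1,2) by auto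
  next
    assume suffix: "\<forall>t. k \<le> t \<longrightarrow> t < len c e \<longrightarrow> P c e ! t \<notin> closed_nbhd E w"
    have "k \<le> len c e - 1" "len c e - 1 < len c e" using k(3) by linarith+
    then have "b e \<in> ?U" using outside[of "len c e - 1"] suffix path_nth_last[OF k(1,2)] by auto
    moreover have "(induced_edge E ?U)\<^sup>*\<^sup>* x (b e)"
      using path_segment_connected[OF k(1,2), of "len c e - 1" k ?U] outside k
        path_nth_last[OF k(1,2)] suffix by auto
    ultimately show ?thesis using that[of e] k(2) by auto
  qed
qed

text \<open>If \<open>w\<close> lies inside the subdivided edge between \<open>b a\<close> and \<open>b a'\<close>, the detour through a third
branch vertex avoids \<open>N[w]\<close>.\<close>
lemma branches_connected_outside_closed_nbhd:
  assumes "w \<in> V" "a < 4" "a' < 4" "b a \<notin> closed_nbhd E w" "b a' \<notin> closed_nbhd E w"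
  shows "(induced_edge E (V - closed_nbhd E w))\<^sup>*\<^sup>* (b a) (b a')"
proof (cases "a = a' \<or> w \<notin> set (inner (P (min a a') (max a a')))")
  case True
  then show ?thesis using branches_linked_outside_closed_nbhd[OF assms(1-3) _ assms(4,5)] by auto
next
  case False
  then have "a \<noteq> a'" and w_inner: "w \<in> set (inner (P (min a a') (max a a')))" by auto
  obtain f where f: "f < 4" "f \<noteq> a" "f \<noteq> a'" using ex_other_index[of a a' a] by blast
  obtain m where m: "0 < m" "m < len (min a a') (max a a') - 1" "w = P (min a a') (max a a') ! m"
    using w_inner by (rule mem_inner_obtain)
  have f_outside: "b f \<notin> closed_nbhd E w"
  proof
    assume "b f \<in> closed_nbhd E w"
    then have "f = min a a' \<or> f = max a a'"
      using interior_closed_nbhd_branch[of "min a a'" "max a a'" m f] m f(1) assms(2,3) \<open>a \<noteq> a'\<close>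
      by (auto simp: min_def)
    then show False using f by (cases "a \<le> a'") (auto simp: min_def max_def)
  qed
  have w_outer: "w \<notin> set (inner (P (min a f) (max a f)))" "w \<notin> set (inner (P (min f a') (max f a')))"
    using inner_disjoint[of "min a f" "max a f" "min a a'" "max a a'"]
      inner_disjoint[of "min f a'" "max f a'" "min a a'" "max a a'"] w_inner f assms(2,3) \<open>a \<noteq> a'\<close>
    by (auto simp: min_def max_def split: if_splits)
  have "(induced_edge E (V - closed_nbhd E w))\<^sup>*\<^sup>* (b a) (b f)"
    using branches_linked_outside_closed_nbhd[OF assms(1,2) f(1) _ assms(4) f_outside w_outer(1)] f(2)
    by simp
  also have "(induced_edge E (V - closed_nbhd E w))\<^sup>*\<^sup>* (b f) (b a')"
    using branches_linked_outside_closed_nbhd[OF assms(1) f(1) assms(3) _ f_outside assms(5) w_outer(2)] f(3)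
    by simp
  finally show ?thesis .
qed

lemma connected_outside_closed_nbhd: "w \<in> V \<Longrightarrow> connected_in E (V - closed_nbhd E w)"
  unfolding connected_in_def
proof (intro ballI)
  fix x y
  assume "w \<in> V" "x \<in> V - closed_nbhd E w" "y \<in> V - closed_nbhd E w"
  then obtain a a' where
    "a < 4" "b a \<in> V - closed_nbhd E w" "(induced_edge E (V - closed_nbhd E w))\<^sup>*\<^sup>* x (b a)"
    "a' < 4" "b a' \<in> V - closed_nbhd E w" "(induced_edge E (V - closed_nbhd E w))\<^sup>*\<^sup>* y (b a')"
    by (metis reaches_branch_outside_closed_nbhd)
  then show "(induced_edge E (V - closed_nbhd E w))\<^sup>*\<^sup>* x y"
    using branches_connected_outside_closed_nbhd[OF \<open>w \<in> V\<close>, of a a'] induced_edge_rtranclp_sym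
    by (meson DiffD2 rtranclp_trans)
qed

definition subdivided_triangle :: "nat \<Rightarrow> 'a set" where
  "subdivided_triangle k =
     {P c e ! t | c e t. c < e \<and> e < 4 \<and> c \<noteq> k \<and> e \<noteq> k \<and> t < len c e}"

lemma path_nth_in_subdivided_triangle:
  "c < e \<Longrightarrow> e < 4 \<Longrightarrow> c \<noteq> k \<Longrightarrow> e \<noteq> k \<Longrightarrow> t < len c e \<Longrightarrow> P c e ! t \<in> subdivided_triangle k"
  unfolding subdivided_triangle_def by blast

lemma subdivided_triangle_subset_V: "subdivided_triangle k \<subseteq> V"
  unfolding subdivided_triangle_def using path_nth_in_V by blast

lemma subdivided_triangle_nonempty: "subdivided_triangle k \<noteq> {}"
proof -
  obtain c e :: nat where ce: "c < e" "e < 4" "c \<noteq> k" "e \<noteq> k"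
    by (rule that[of "if k = 0 then 1 else 0" "if k = 2 then 3 else 2"]) auto
  have "0 < len c e" using path_length[OF ce(1,2)] by linarith
  then show ?thesis unfolding subdivided_triangle_def using ce by blast
qed

lemma path_nth_distance_two_nonadjacent:
  assumes "c < e" "e < 4" "t + 2 < len c e"
  shows "\<not> E (P c e ! t) (P c e ! (t + 2))"
proof
  assume adj: "E (P c e ! t) (P c e ! (t + 2))"
  have "4 \<le> len c e" using path_length[OF assms(1,2)] .
  show False
  proof (cases "t = 0")
    case True
    have "E (P c e ! 2) (P c e ! 0)" using E_sym[OF adj] True by (simp add: numeral_2_eq_2)
    then have "P c e ! 0 = P c e ! (2 - 1) \<or> P c e ! 0 = P c e ! (2 + 1)"
      by (rule interior_neighbour_cases[OF assms(1,2), rotated 2]) (use \<open>4 \<le> len c e\<close> in auto)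
    moreover have "0 < len c e" "1 < len c e" "3 < len c e" using \<open>4 \<le> len c e\<close> by linarith+
    ultimately show False using nth_eq_iff_index_eq[OF path_distinct[OF assms(1,2)]] by fastforce
  next
    case False
    then have "P c e ! (t + 2) = P c e ! (t - 1) \<or> P c e ! (t + 2) = P c e ! (t + 1)"
      using interior_neighbour_cases[OF assms(1,2), of t] adj assms(3) by auto
    then show False using path_distinct[OF assms(1,2)] assms(3) by (auto simp: nth_eq_iff_index_eq)
  qed
qed

lemma interior_vertices_of_different_paths:
  assumes "p < q" "q < 4" "0 < s" "s < len p q - 1"
    and "p' < q'" "q' < 4" "0 < s'" "s' < len p' q' - 1" "(p', q') \<noteq> (p, q)"
  shows "P p q ! s \<noteq> P p' q' ! s'" "\<not> E (P p q ! s) (P p' q' ! s')"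
proof -
  have "s' < len p' q'" using assms(8) by linarith
  then show "P p q ! s \<noteq> P p' q' ! s'"
    using interior_vertex_unique[OF assms(1-4) assms(5,6), of s'] assms(9) by auto
  show "\<not> E (P p q ! s) (P p' q' ! s')"
  proof
    assume "E (P p q ! s) (P p' q' ! s')"
    then have "P p' q' ! s' = P p q ! (s - 1) \<or> P p' q' ! s' = P p q ! (s + 1)"
      using interior_neighbour_cases[OF assms(1-4)] by blast
    moreover have "s - 1 < len p q" "s + 1 < len p q" using assms(4) by linarith+
    ultimately show False
      using interior_vertex_unique[OF assms(5-8) assms(1,2), of "s - 1"]
        interior_vertex_unique[OF assms(5-8) assms(1,2), of "s + 1"] assms(4,9) by auto
  qed
qed

lemma branch_neighbour_interior:
  assumes "a \<noteq> d" "a < 4" "d < 4"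
  obtains s where "0 < s" "s < len (min a d) (max a d) - 1"
    "E (b a) (P (min a d) (max a d) ! s)"
proof (cases "a < d")
  case True
  have "4 \<le> len a d" using path_length[OF True assms(3)] .
  then have "E (b a) (P a d ! 1)"
    using path_nth_adjacent[OF True assms(3), of 0] path_nth_first[OF True assms(3)] by simp
  then show ?thesis using that[of 1] True \<open>4 \<le> len a d\<close> by simp
next
  case False
  then have "d < a" using assms(1) by simp
  have "4 \<le> len d a" using path_length[OF \<open>d < a\<close> assms(2)] .
  then have "E (P d a ! (len d a - 2)) (P d a ! Suc (len d a - 2))"
    using path_nth_adjacent[OF \<open>d < a\<close> assms(2)] by simp
  moreover have "Suc (len d a - 2) = len d a - 1" using \<open>4 \<le> len d a\<close> by simp
  ultimately have "E (b a) (P d a ! (len d a - 2))"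
    using path_nth_last[OF \<open>d < a\<close> assms(2)] E_sym by simp
  then show ?thesis using that[of "len d a - 2"] \<open>d < a\<close> \<open>4 \<le> len d a\<close> by simp
qed

lemma branch_two_nonadjacent_neighbours_in_triangle:
  assumes "a < 4" "d < 4" "f < 4" "a \<noteq> d" "a \<noteq> f" "d \<noteq> f" "k \<notin> {a, d, f}"
  shows "\<exists>u\<in>subdivided_triangle k. \<exists>v\<in>subdivided_triangle k.
    E (b a) u \<and> E (b a) v \<and> b a \<noteq> u \<and> b a \<noteq> v \<and> u \<noteq> v \<and> \<not> E u v"
proof -
  obtain s where s: "0 < s" "s < len (min a d) (max a d) - 1" "E (b a) (P (min a d) (max a d) ! s)"
    using branch_neighbour_interior[OF assms(4,1,2)] .
  obtain s' where s': "0 < s'" "s' < len (min a f) (max a f) - 1" "E (b a) (P (min a f) (max a f) ! s')"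
    using branch_neighbour_interior[OF assms(5,1,3)] .
  have "(min a f, max a f) \<noteq> (min a d, max a d)"
    using assms(5,6) by (auto simp: min_def max_def)
  then have "P (min a d) (max a d) ! s \<noteq> P (min a f) (max a f) ! s'"
    "\<not> E (P (min a d) (max a d) ! s) (P (min a f) (max a f) ! s')"
    using interior_vertices_of_different_paths[of "min a d" "max a d" s "min a f" "max a f" s']
      s s' assms(1-5) by (auto simp: min_def max_def)
  moreover have "P (min a d) (max a d) ! s \<in> subdivided_triangle k"
    "P (min a f) (max a f) ! s' \<in> subdivided_triangle k"
    using path_nth_in_subdivided_triangle[of "min a d" "max a d" k s]
      path_nth_in_subdivided_triangle[of "min a f" "max a f" k s'] s s' assms
    by (auto simp: min_def max_def)
  ultimately show ?thesis using s(3) s'(3) E_irrefl by blast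
qed

lemma two_nonadjacent_neighbours_in_subdivided_triangle:
  assumes "k < 4"
  shows "two_nonadjacent_neighbours_in E (subdivided_triangle k)"
  unfolding two_nonadjacent_neighbours_in_def
proof
  fix s
  assume "s \<in> subdivided_triangle k"
  then obtain c e m where cem: "c < e" "e < 4" "c \<noteq> k" "e \<noteq> k" "m < len c e" "s = P c e ! m"
    unfolding subdivided_triangle_def by blast
  obtain f where f: "f < 4" "f \<noteq> c" "f \<noteq> e" "f \<noteq> k" using ex_other_index[of c e k] by blast
  consider "m = 0" | "m = len c e - 1" | "0 < m" "m < len c e - 1" using cem(5) by linarith
  then show "\<exists>u\<in>subdivided_triangle k. \<exists>v\<in>subdivided_triangle k.
      E s u \<and> E s v \<and> s \<noteq> u \<and> s \<noteq> v \<and> u \<noteq> v \<and> \<not> E u v"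
  proof cases
    case 1
    then show ?thesis
      using branch_two_nonadjacent_neighbours_in_triangle[of c e f k] cem f path_nth_first[OF cem(1,2)]
      by auto
  next
    case 2
    then show ?thesis
      using branch_two_nonadjacent_neighbours_in_triangle[of e c f k] cem f path_nth_last[OF cem(1,2)]
      by auto
  next
    case 3
    have "E s (P c e ! (m - 1))" "E s (P c e ! (m + 1))"
      using path_nth_adjacent[OF cem(1,2), of "m - 1"] path_nth_adjacent[OF cem(1,2), of m]
        E_sym 3 cem by auto
    moreover have "\<not> E (P c e ! (m - 1)) (P c e ! (m + 1))"
      using path_nth_distance_two_nonadjacent[OF cem(1,2), of "m - 1"] 3 by simp
    moreover have "P c e ! (m - 1) \<noteq> P c e ! (m + 1)"
      using path_distinct[OF cem(1,2)] 3 by (simp add: nth_eq_iff_index_eq)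
    moreover have "P c e ! (m - 1) \<in> subdivided_triangle k" "P c e ! (m + 1) \<in> subdivided_triangle k"
      using path_nth_in_subdivided_triangle[OF cem(1-4)] 3 by auto
    ultimately show ?thesis using E_irrefl by blast
  qed
qed

lemma subdivided_triangle_avoiding_closed_nbhd:
  assumes "w \<in> V"
  obtains k where "k < 4" "subdivided_triangle k \<inter> closed_nbhd E w = {}"
  using assms
proof (cases rule: vertex_cases)
  case (branch a)
  have "subdivided_triangle a \<inter> closed_nbhd E w = {}"
    using branch_closed_nbhd_on_path[OF branch(1)] branch(2)
    unfolding subdivided_triangle_def by fastforce
  then show ?thesis using that branch(1) by blast
next
  case (interior i j m)
  define k where "k = (if m = len i j - 2 then j else i)"
  have "P c e ! t \<notin> closed_nbhd E w"
    if "c < e" "e < 4" "c \<noteq> k" "e \<noteq> k" "t < len c e" for c e t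
  proof
    assume t: "P c e ! t \<in> closed_nbhd E w"
    have "4 \<le> len i j" using path_length[OF interior(1,2)] .
    have "k = i \<or> k = j" unfolding k_def by auto
    then have "t = 0 \<or> t = len c e - 1"
      using interior_closed_nbhd_on_path[OF interior(1-4) that(1,2,5)] t interior(5) that(3,4) by auto
    then have "b c \<in> closed_nbhd E w \<or> b e \<in> closed_nbhd E w"
      using t path_nth_first[OF that(1,2)] path_nth_last[OF that(1,2)] by auto
    then show False
      using interior_closed_nbhd_branch[OF interior(1-4), of c] interior_closed_nbhd_branch[OF interior(1-4), of e]
        interior(5) that \<open>4 \<le> len i j\<close> unfolding k_def by (auto split: if_splits)
  qed
  then have "subdivided_triangle k \<inter> closed_nbhd E w = {}"
    unfolding subdivided_triangle_def by blast
  moreover have "k < 4" unfolding k_def using interior(1,2) by auto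
  ultimately show ?thesis using that by blast
qed

lemma avoiding_set_with_two_nonadjacent_neighbours:
  assumes "w \<in> V"
  shows "\<exists>S \<subseteq> V - closed_nbhd E w. finite S \<and> S \<noteq> {} \<and> two_nonadjacent_neighbours_in E S"
proof -
  obtain k where "k < 4" "subdivided_triangle k \<inter> closed_nbhd E w = {}"
    using assms by (rule subdivided_triangle_avoiding_closed_nbhd)
  then show ?thesis
    using subdivided_triangle_subset_V[of k] finite_subset[OF subdivided_triangle_subset_V finite_V]
      subdivided_triangle_nonempty two_nonadjacent_neighbours_in_subdivided_triangle
    by (intro exI[of _ "subdivided_triangle k"]) auto
qed

end

theorem theorem3p8:
  fixes V :: "'a set" and E :: "'a \<Rightarrow> 'a \<Rightarrow> bool"
  assumes "ge2_subdivision_K4 V E"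
  shows "\<not> restricted_frame_graph V E"
proof
  assume "restricted_frame_graph V E"
  then obtain F where "restricted_frame_rep V E F"
    using restricted_frame_graph_imp_rep by blast
  then interpret frames: restricted_frame_rep V E F .
  obtain b P where "K4_subdivision V E b P"
    using assms ge2_subdivision_K4_imp_locale by blast
  then interpret graph: K4_subdivision V E b P .
  have "V \<noteq> {}" using graph.branch_in_V[of 0] by auto
  then obtain w where "w \<in> V" "\<not> connected_in E (V - closed_nbhd E w)"
    using frames.closed_nbhd_complement_disconnected
      graph.avoiding_set_with_two_nonadjacent_neighbours by blast
  then show False using graph.connected_outside_closed_nbhd by blast
qed

end
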